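(* Every monotone sequence $(a_i)_{i\in\mathbb N}$ in $\mathcal R$ has a supremum and an infimum in $\mathcal R$.
   Context: $\mathbb R^*$ is an ordered field containing $\mathbb R$ as an ordered subfield, equipped with a surjective ring homomorphism $J:\mathbb R^{\mathbb N}\to\mathbb R^*$ satisfying: if $a\in\mathbb R$ and there is $k\ge1$ with $\phi_{kn}\ge a$ for all $n\ge1$, then $J(\phi)\ge a$. A hyperreal $\xi$ is bounded if $|\xi|<k$ for some $k\in\mathbb N$. For nonzero $a,b\in\mathbb R^*$, $a\simeq b$ iff $a/b$ and $b/a$ are bounded; $[a]$ is the class of $a$; $\mathbb R^*/{\simeq}$ is ordered by $[a]\le[b]$ iff for all $x\in[a]$, $y\in[b]$, $x\simeq y$ or $x<y$. Let $\mathcal A$ be the set of monotone sequences in $\mathbb R^*/{\simeq}$; for $(a_i),(b_j)\in\mathcal A$, $(a_i)<(b_j)$ iff there is $M$ with $a_n<b_m$ for all $n,m>M$, and $(a_i)\approx(b_j)$ iff neither $(a_i)<(b_j)$ nor $(b_j)<(a_i)$. $\mathcal R=\mathcal A/{\approx}$ with the induced total order, and $\mathbb R^*/{\simeq}$ is identified with the classes of constant sequences. *)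

theory Defs
  imports Complex_Main
begin

definition hyper_structure :: "(real \<Rightarrow> 'a::linordered_field) \<Rightarrow> ((nat \<Rightarrow> real) \<Rightarrow> 'a) \<Rightarrow> bool" where
  "hyper_structure emb J \<longleftrightarrow>
     (\<forall>x y. emb (x + y) = emb x + emb y) \<and>
     (\<forall>x y. emb (x * y) = emb x * emb y) \<and>
     emb 1 = 1 \<and>
     (\<forall>x y. x \<le> y \<longleftrightarrow> emb x \<le> emb y) \<and>
     (\<forall>f g. J (\<lambda>n. f n + g n) = J f + J g) \<and>
     (\<forall>f g. J (\<lambda>n. f n * g n) = J f * J g) \<and>
     J (\<lambda>n. 1) = 1 \<and>
     surj J \<and>
     (\<forall>a \<phi>. (\<exists>k::nat. k \<ge> 1 \<and> (\<forall>n::nat. n \<ge> 1 \<longrightarrow> \<phi> (k * n) \<ge> a)) \<longrightarrow> J \<phi> \<ge> emb a)"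

definition hbounded :: "'a::linordered_field \<Rightarrow> bool" where
  "hbounded \<xi> \<longleftrightarrow> (\<exists>k::nat. \<bar>\<xi>\<bar> < of_nat k)"

definition hsim :: "'a::linordered_field \<Rightarrow> 'a \<Rightarrow> bool" where
  "hsim a b \<longleftrightarrow> a \<noteq> 0 \<and> b \<noteq> 0 \<and> hbounded (a / b) \<and> hbounded (b / a)"

definition hclass :: "'a::linordered_field \<Rightarrow> 'a set" where
  "hclass a = {b. hsim a b}"

definition hclasses :: "'a::linordered_field set set" where
  "hclasses = hclass ` {a. a \<noteq> 0}"

definition cls_le :: "'a::linordered_field set \<Rightarrow> 'a set \<Rightarrow> bool" where
  "cls_le A B \<longleftrightarrow> (\<forall>x\<in>A. \<forall>y\<in>B. hsim x y \<or> \<bar>x\<bar> < \<bar>y\<bar>)"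

definition cls_less :: "'a::linordered_field set \<Rightarrow> 'a set \<Rightarrow> bool" where
  "cls_less A B \<longleftrightarrow> cls_le A B \<and> A \<noteq> B"

definition seqA :: "(nat \<Rightarrow> 'a::linordered_field set) set" where
  "seqA = {s. (\<forall>i. s i \<in> hclasses) \<and>
              ((\<forall>i j. i \<le> j \<longrightarrow> cls_le (s i) (s j)) \<or> (\<forall>i j. i \<le> j \<longrightarrow> cls_le (s j) (s i)))}"

definition seq_less :: "(nat \<Rightarrow> 'a::linordered_field set) \<Rightarrow> (nat \<Rightarrow> 'a set) \<Rightarrow> bool" where
  "seq_less s t \<longleftrightarrow> (\<exists>M. \<forall>n m. n > M \<and> m > M \<longrightarrow> cls_less (s n) (t m))"

definition seq_equiv :: "(nat \<Rightarrow> 'a::linordered_field set) \<Rightarrow> (nat \<Rightarrow> 'a set) \<Rightarrow> bool" where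
  "seq_equiv s t \<longleftrightarrow> \<not> seq_less s t \<and> \<not> seq_less t s"

definition Rset :: "(nat \<Rightarrow> 'a::linordered_field set) set set" where
  "Rset = (\<lambda>s. {t \<in> seqA. seq_equiv s t}) ` seqA"

definition R_le :: "(nat \<Rightarrow> 'a::linordered_field set) set \<Rightarrow> (nat \<Rightarrow> 'a set) set \<Rightarrow> bool" where
  "R_le X Y \<longleftrightarrow> (\<forall>s\<in>X. \<forall>t\<in>Y. seq_less s t \<or> seq_equiv s t)"

definition R_mono_seq :: "(nat \<Rightarrow> (nat \<Rightarrow> 'a::linordered_field set) set) \<Rightarrow> bool" where
  "R_mono_seq Xs \<longleftrightarrow> (\<forall>k. Xs k \<in> Rset) \<and>
     ((\<forall>i j. i \<le> j \<longrightarrow> R_le (Xs i) (Xs j)) \<or> (\<forall>i j. i \<le> j \<longrightarrow> R_le (Xs j) (Xs i)))"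

definition R_is_sup :: "(nat \<Rightarrow> (nat \<Rightarrow> 'a::linordered_field set) set) \<Rightarrow> (nat \<Rightarrow> 'a set) set \<Rightarrow> bool" where
  "R_is_sup Xs S \<longleftrightarrow> S \<in> Rset \<and> (\<forall>k. R_le (Xs k) S) \<and>
     (\<forall>U\<in>Rset. (\<forall>k. R_le (Xs k) U) \<longrightarrow> R_le S U)"

definition R_is_inf :: "(nat \<Rightarrow> (nat \<Rightarrow> 'a::linordered_field set) set) \<Rightarrow> (nat \<Rightarrow> 'a set) set \<Rightarrow> bool" where
  "R_is_inf Xs I \<longleftrightarrow> I \<in> Rset \<and> (\<forall>k. R_le I (Xs k)) \<and>
     (\<forall>L\<in>Rset. (\<forall>k. R_le L (Xs k)) \<longrightarrow> R_le L I)"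

end

theory Submission
  imports Defs
begin

text \<open>Write \<open>s \<prec> t\<close> for \<open>seq_less s t\<close> on the monotone sequences of magnitude classes.
  This is a strict weak order (irreflexive, transitive and negatively transitive), and the constant
  sequences are dense in it: if \<open>s \<prec> t \<prec> u\<close>, a late term of \<open>t\<close> gives a constant sequence
  strictly between \<open>s\<close> and \<open>u\<close>. A strictly increasing chain of constant sequences has a least
  upper bound, the sequence of its values, which is again monotone. So if a weakly increasing
  sequence \<open>r\<close> has no greatest term, pass to a strictly increasing subsequence, squeeze constant
  sequences between its terms, and take the least upper bound of those; otherwise the greatest term
  is the supremum. The infimum of an increasing sequence is its first term, and decreasing sequences
  are handled by the same argument for the reversed order.\<close>

section \<open>Strict weak orders\<close>

text \<open>Here \<open>\<not> y \<prec> x\<close> plays the role of \<open>x \<preceq> y\<close>; bounds are unique only up to the induced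
  equivalence, which is exactly the equivalence used to form \<open>Rset\<close>.\<close>

locale strict_weak_order =
  fixes S :: "'b set" and less :: "'b \<Rightarrow> 'b \<Rightarrow> bool" (infix "\<prec>" 50)
  assumes irrefl: "s \<in> S \<Longrightarrow> \<not> s \<prec> s"
    and trans: "s \<in> S \<Longrightarrow> t \<in> S \<Longrightarrow> u \<in> S \<Longrightarrow> s \<prec> t \<Longrightarrow> t \<prec> u \<Longrightarrow> s \<prec> u"
    and neg_trans: "s \<in> S \<Longrightarrow> t \<in> S \<Longrightarrow> u \<in> S \<Longrightarrow> s \<prec> u \<Longrightarrow> s \<prec> t \<or> t \<prec> u"
begin

lemma dual_strict_weak_order: "strict_weak_order S (\<lambda>s t. t \<prec> s)"
  by unfold_locales (use irrefl trans neg_trans in blast)+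

lemma chain_less:
  assumes "\<And>j. c j \<in> S" and "\<And>j. c j \<prec> c (Suc j)" and "i < j"
  shows "c i \<prec> c j"
  using \<open>i < j\<close>
proof (induction j rule: less_Suc_induct)
  case (1 i)
  then show ?case by (fact assms(2))
next
  case (2 i j k)
  then show ?case using assms(1) trans by blast
qed

lemma strict_subseq_of_no_max:
  fixes r :: "nat \<Rightarrow> _"
  assumes r_in: "\<And>k. r k \<in> S"
    and r_mono: "\<And>i j. i \<le> j \<Longrightarrow> \<not> r j \<prec> r i"
    and no_max: "\<And>K. \<exists>k. r K \<prec> r k"
  obtains f where "strict_mono f" and "\<And>j. r (f j) \<prec> r (f (Suc j))"
proof -
  have "\<exists>k. K < k \<and> r K \<prec> r k" for K
    by (metis no_max r_mono not_less)
  then obtain f where "\<forall>j. f j < f (Suc j) \<and> r (f j) \<prec> r (f (Suc j))"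
    using dependent_nat_choice[of "\<lambda>_ _. True" "\<lambda>_ K k. K < k \<and> r K \<prec> r k"] by blast
  then show thesis
    using that strict_mono_Suc_iff by blast
qed

end

locale dense_chain_complete = strict_weak_order S less for S :: "'b set" and less (infix "\<prec>" 50) +
  fixes K :: "'b set"
  assumes K_subset: "K \<subseteq> S"
    and dense: "s \<in> S \<Longrightarrow> t \<in> S \<Longrightarrow> u \<in> S \<Longrightarrow> s \<prec> t \<Longrightarrow> t \<prec> u \<Longrightarrow> \<exists>c\<in>K. s \<prec> c \<and> c \<prec> u"
    and chain_lub: "(\<And>j::nat. c j \<in> K) \<Longrightarrow> (\<And>i j. i < j \<Longrightarrow> c i \<prec> c j) \<Longrightarrow>
      \<exists>\<sigma>\<in>S. (\<forall>k. \<not> \<sigma> \<prec> c k) \<and> (\<forall>u\<in>S. u \<prec> \<sigma> \<longrightarrow> (\<exists>k. u \<prec> c k))"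
begin

lemma strict_incseq_lub:
  assumes R: "\<And>j. R j \<in> S" and inc: "\<And>j. R j \<prec> R (Suc j)"
  shows "\<exists>\<sigma>\<in>S. (\<forall>j. \<not> \<sigma> \<prec> R j) \<and> (\<forall>u\<in>S. u \<prec> \<sigma> \<longrightarrow> (\<exists>j. u \<prec> R j))"
proof -
  have "\<exists>c\<in>K. R (2*j) \<prec> c \<and> c \<prec> R (2*j+2)" for j
    using dense[OF R R R inc[of "2*j"] inc[of "Suc (2*j)"]] by simp
  then obtain c where c: "\<And>j. c j \<in> K" and c_above: "\<And>j. R (2*j) \<prec> c j"
    and c_below: "\<And>j. c j \<prec> R (2*j+2)"
    by metis
  have cS: "c j \<in> S" for j
    using c K_subset by blast
  have "c j \<prec> c (Suc j)" for j
    using trans[OF cS R cS c_below, of j "Suc j"] c_above[of "Suc j"] by simp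
  then have "c i \<prec> c j" if "i < j" for i j
    using chain_less[of c, OF cS _ that] by blast
  then obtain \<sigma> where \<sigma>: "\<sigma> \<in> S" and ub: "\<And>k. \<not> \<sigma> \<prec> c k"
    and approx: "\<And>u. u \<in> S \<Longrightarrow> u \<prec> \<sigma> \<Longrightarrow> \<exists>k. u \<prec> c k"
    using chain_lub[of c, OF c] by blast
  have R_below_c: "R j \<prec> c j" for j
  proof (cases "j = 0")
    case True
    then show ?thesis using c_above[of 0] by simp
  next
    case False
    then have "R j \<prec> R (2*j)"
      using chain_less[of R, OF R inc] by simp
    then show ?thesis
      by (rule trans[OF R R cS _ c_above])
  qed
  have "\<not> \<sigma> \<prec> R j" for j
    using ub trans[OF \<sigma> R cS _ R_below_c] by blast
  moreover have "\<exists>j. u \<prec> R j" if u: "u \<in> S" and "u \<prec> \<sigma>" for u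
  proof -
    obtain k where "u \<prec> c k"
      using approx[OF u \<open>u \<prec> \<sigma>\<close>] by blast
    then have "u \<prec> R (2*k+2)"
      by (rule trans[OF u cS R _ c_below])
    then show ?thesis ..
  qed
  ultimately show ?thesis
    using \<sigma> by blast
qed

theorem monotone_seq_lub:
  fixes r :: "nat \<Rightarrow> _"
  assumes r_in: "\<And>k. r k \<in> S" and r_mono: "\<And>i j. i \<le> j \<Longrightarrow> \<not> r j \<prec> r i"
  shows "\<exists>\<sigma>\<in>S. (\<forall>k. \<not> \<sigma> \<prec> r k) \<and> (\<forall>u\<in>S. (\<forall>k. \<not> u \<prec> r k) \<longrightarrow> \<not> u \<prec> \<sigma>)"
proof (cases "\<exists>K. \<forall>k. \<not> r K \<prec> r k")
  case True
  then show ?thesis using r_in by blast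
next
  case False
  then obtain f where f: "strict_mono f" and inc: "\<And>j. r (f j) \<prec> r (f (Suc j))"
    using strict_subseq_of_no_max[of r] r_in r_mono False by blast
  obtain \<sigma> where \<sigma>: "\<sigma> \<in> S" and ub: "\<forall>j. \<not> \<sigma> \<prec> r (f j)"
    and approx: "\<forall>u\<in>S. u \<prec> \<sigma> \<longrightarrow> (\<exists>j. u \<prec> r (f j))"
    using strict_incseq_lub[of "r \<circ> f"] r_in inc by auto
  have "\<not> \<sigma> \<prec> r k" for k
    using neg_trans[OF \<sigma> r_in r_in, of k "f k"] ub r_mono[OF seq_suble[OF f]] by blast
  then show ?thesis using \<sigma> approx by blast
qed

end

section \<open>Magnitude classes\<close>

lemma hbounded_mult:
  assumes "hbounded (a::'a::linordered_field)" and "hbounded b"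
  shows "hbounded (a * b)"
proof -
  from assms obtain k l :: nat where k: "\<bar>a\<bar> < of_nat k" and l: "\<bar>b\<bar> < of_nat l"
    unfolding hbounded_def by blast
  have "0 < (of_nat k :: 'a)"
    using k abs_ge_zero[of a] by linarith
  have "\<bar>a * b\<bar> = \<bar>a\<bar> * \<bar>b\<bar>"
    by (simp add: abs_mult)
  also have "\<dots> < of_nat k * of_nat l"
    using k l \<open>0 < of_nat k\<close> by (intro mult_strict_mono) auto
  finally show ?thesis
    unfolding hbounded_def by (metis of_nat_mult)
qed

lemma hbounded_one: "hbounded (1::'a::linordered_field)"
  unfolding hbounded_def by (intro exI[of _ 2]) simp

lemma hbounded_divide_if_abs_le:
  assumes "(y::'a::linordered_field) \<noteq> 0" and "\<bar>x\<bar> \<le> \<bar>y\<bar>"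
  shows "hbounded (x / y)"
proof -
  have "\<bar>x / y\<bar> \<le> 1"
    using assms by (simp add: abs_divide divide_le_eq_1)
  then show ?thesis
    unfolding hbounded_def by (intro exI[of _ 2]) simp
qed

lemma hbounded_divide_total:
  "(x::'a::linordered_field) \<noteq> 0 \<Longrightarrow> y \<noteq> 0 \<Longrightarrow> hbounded (x / y) \<or> hbounded (y / x)"
  by (metis hbounded_divide_if_abs_le linear)

lemma hbounded_divide_trans:
  assumes "(b::'a::linordered_field) \<noteq> 0" and "hbounded (a / b)" and "hbounded (b / c)"
  shows "hbounded (a / c)"
proof -
  have "a / c = (a / b) * (b / c)"
    using assms(1) by simp
  then show ?thesis
    using hbounded_mult assms(2,3) by metis
qed

lemma mem_hclass: "x \<in> hclass a \<longleftrightarrow> a \<noteq> 0 \<and> x \<noteq> 0 \<and> hbounded (a / x) \<and> hbounded (x / a)"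
  unfolding hclass_def hsim_def by auto

lemma hclass_self: "(a::'a::linordered_field) \<noteq> 0 \<Longrightarrow> a \<in> hclass a"
  by (simp add: mem_hclass hbounded_one)

lemma hclass_eqI:
  assumes "(a::'a::linordered_field) \<noteq> 0" "b \<noteq> 0" "hbounded (a / b)" "hbounded (b / a)"
  shows "hclass a = hclass b"
  unfolding set_eq_iff mem_hclass using assms hbounded_divide_trans by metis

lemma cls_le_hclass_iff:
  assumes a: "(a::'a::linordered_field) \<noteq> 0" and b: "b \<noteq> 0"
  shows "cls_le (hclass a) (hclass b) \<longleftrightarrow> hbounded (a / b)"
proof
  assume "cls_le (hclass a) (hclass b)"
  then have "hsim a b \<or> \<bar>a\<bar> < \<bar>b\<bar>"
    unfolding cls_le_def using hclass_self a b by blast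
  then show "hbounded (a / b)"
    using hbounded_divide_if_abs_le b unfolding hsim_def by (metis less_imp_le)
next
  assume ab: "hbounded (a / b)"
  show "cls_le (hclass a) (hclass b)"
    unfolding cls_le_def
  proof (intro ballI)
    fix x y
    assume x: "x \<in> hclass a" and y: "y \<in> hclass b"
    then have "x \<noteq> 0" "y \<noteq> 0"
      by (auto simp: mem_hclass)
    have "hbounded (x / y)"
      using hbounded_divide_trans[of b x y] hbounded_divide_trans[of a x b] x y ab a b
      by (auto simp: mem_hclass)
    then show "hsim x y \<or> \<bar>x\<bar> < \<bar>y\<bar>"
      using hbounded_divide_if_abs_le[of x y] \<open>x \<noteq> 0\<close> \<open>y \<noteq> 0\<close>
      unfolding hsim_def by (metis not_le)
  qed
qed

lemma hclassesE:
  assumes "A \<in> hclasses"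
  obtains a where "a \<noteq> 0" and "A = hclass a"
  using assms unfolding hclasses_def by blast

lemma cls_le_refl: "A \<in> hclasses \<Longrightarrow> cls_le A A"
  by (metis hclassesE cls_le_hclass_iff hbounded_one divide_self)

lemma cls_le_trans:
  "A \<in> hclasses \<Longrightarrow> B \<in> hclasses \<Longrightarrow> C \<in> hclasses \<Longrightarrow> cls_le A B \<Longrightarrow> cls_le B C \<Longrightarrow> cls_le A C"
  by (metis hclassesE cls_le_hclass_iff hbounded_divide_trans)

lemma cls_le_total: "A \<in> hclasses \<Longrightarrow> B \<in> hclasses \<Longrightarrow> cls_le A B \<or> cls_le B A"
  by (metis hclassesE cls_le_hclass_iff hbounded_divide_total)

lemma cls_le_antisym: "A \<in> hclasses \<Longrightarrow> B \<in> hclasses \<Longrightarrow> cls_le A B \<Longrightarrow> cls_le B A \<Longrightarrow> A = B"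
  by (metis hclassesE cls_le_hclass_iff hclass_eqI)

lemma cls_less_iff_not_le: "A \<in> hclasses \<Longrightarrow> B \<in> hclasses \<Longrightarrow> cls_less A B \<longleftrightarrow> \<not> cls_le B A"
  unfolding cls_less_def by (metis cls_le_refl cls_le_total cls_le_antisym)

section \<open>Monotone sequences of magnitude classes\<close>

lemma seqA_hclasses: "s \<in> seqA \<Longrightarrow> s n \<in> hclasses"
  unfolding seqA_def by blast

lemma seq_less_irrefl: "\<not> seq_less s s"
  unfolding seq_less_def cls_less_def by (metis less_add_one)

lemma seq_less_trans:
  assumes "s \<in> seqA" "t \<in> seqA" "u \<in> seqA" and "seq_less s t" "seq_less t u"
  shows "seq_less s u"
proof -
  obtain M1 where M1: "\<And>n m. n > M1 \<Longrightarrow> m > M1 \<Longrightarrow> cls_less (s n) (t m)"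
    using assms(4) unfolding seq_less_def by blast
  obtain M2 where M2: "\<And>n m. n > M2 \<Longrightarrow> m > M2 \<Longrightarrow> cls_less (t n) (u m)"
    using assms(5) unfolding seq_less_def by blast
  define N where "N = Suc (max M1 M2)"
  show ?thesis
    unfolding seq_less_def
  proof (intro exI[of _ "max M1 M2"] allI impI)
    fix n m
    assume "max M1 M2 < n \<and> max M1 M2 < m"
    then have "cls_less (s n) (t N)" "cls_less (t N) (u m)"
      using M1 M2 N_def by auto
    then show "cls_less (s n) (u m)"
      using assms(1-3) seqA_hclasses cls_less_iff_not_le cls_le_trans cls_le_total by metis
  qed
qed

text \<open>Monotonicity of \<open>t\<close> is needed here: it lets the late terms of \<open>t\<close> lying below a term of
  \<open>s\<close> and above a term of \<open>u\<close> be compared, which puts a term of \<open>u\<close> below a term of \<open>s\<close>.\<close>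
lemma seq_less_neg_trans:
  assumes s: "s \<in> seqA" and t: "t \<in> seqA" and u: "u \<in> seqA" and "seq_less s u"
  shows "seq_less s t \<or> seq_less t u"
proof (rule ccontr)
  assume "\<not> (seq_less s t \<or> seq_less t u)"
  then have ts: "\<And>M. \<exists>n m. n > M \<and> m > M \<and> cls_le (t m) (s n)"
    and ut: "\<And>M. \<exists>n m. n > M \<and> m > M \<and> cls_le (u m) (t n)"
    unfolding seq_less_def using s t u seqA_hclasses cls_less_iff_not_le by metis+
  obtain M where M: "\<And>n m. n > M \<Longrightarrow> m > M \<Longrightarrow> cls_less (s n) (u m)"
    using \<open>seq_less s u\<close> unfolding seq_less_def by blast
  have cl: "\<And>n. s n \<in> hclasses" "\<And>n. t n \<in> hclasses" "\<And>n. u n \<in> hclasses"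
    using s t u seqA_hclasses by auto
  from t consider (inc) "\<forall>i j. i \<le> j \<longrightarrow> cls_le (t i) (t j)"
    | (dec) "\<forall>i j. i \<le> j \<longrightarrow> cls_le (t j) (t i)"
    unfolding seqA_def by blast
  then have "\<exists>n k. n > M \<and> k > M \<and> cls_le (u k) (s n)"
  proof cases
    case inc
    obtain m1 k where "m1 > M" "k > M" "cls_le (u k) (t m1)" using ut by blast
    moreover obtain n m2 where "n > m1" "m2 > m1" "cls_le (t m2) (s n)" using ts by blast
    ultimately show ?thesis
      using inc cl cls_le_trans[of "u k" "t m1" "t m2"] cls_le_trans[of "u k" "t m2" "s n"]
      by (metis less_imp_le less_trans)
  next
    case dec
    obtain n m1 where "n > M" "m1 > M" "cls_le (t m1) (s n)" using ts by blast
    moreover obtain m2 k where "m2 > m1" "k > m1" "cls_le (u k) (t m2)" using ut by blast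
    ultimately show ?thesis
      using dec cl cls_le_trans[of "u k" "t m2" "t m1"] cls_le_trans[of "u k" "t m1" "s n"]
      by (metis less_imp_le less_trans)
  qed
  then show False
    using M cl cls_less_iff_not_le by metis
qed

interpretation seq_order: strict_weak_order seqA seq_less
  by unfold_locales (use seq_less_irrefl seq_less_trans seq_less_neg_trans in blast)+

definition const_seqs :: "(nat \<Rightarrow> 'a::linordered_field set) set" where
  "const_seqs = (\<lambda>A _. A) ` hclasses"

lemma const_seqs_subset_seqA: "const_seqs \<subseteq> seqA"
  unfolding const_seqs_def seqA_def using cls_le_refl by auto

lemma const_seqs_values:
  assumes "\<And>j. c j \<in> const_seqs"
  shows "\<exists>d. (\<forall>j. d j \<in> hclasses) \<and> c = (\<lambda>j _. d j)"
proof (intro exI conjI allI)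
  show "c j 0 \<in> hclasses" for j
    using assms[of j] unfolding const_seqs_def by auto
  show "c = (\<lambda>j _. c j 0)"
  proof
    show "c j = (\<lambda>_. c j 0)" for j
      using assms[of j] unfolding const_seqs_def by auto
  qed
qed

lemma seq_less_const_iff: "seq_less (\<lambda>_. A) (\<lambda>_. B) \<longleftrightarrow> cls_less A B"
  unfolding seq_less_def by auto

lemma const_seq_between:
  assumes "s \<in> seqA" "t \<in> seqA" "u \<in> seqA" and "seq_less s t" "seq_less t u"
  shows "\<exists>c\<in>const_seqs. seq_less s c \<and> seq_less c u"
proof -
  obtain M1 where M1: "\<And>n m. n > M1 \<Longrightarrow> m > M1 \<Longrightarrow> cls_less (s n) (t m)"
    using assms(4) unfolding seq_less_def by blast
  obtain M2 where M2: "\<And>n m. n > M2 \<Longrightarrow> m > M2 \<Longrightarrow> cls_less (t n) (u m)"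
    using assms(5) unfolding seq_less_def by blast
  define A where "A = t (Suc (max M1 M2))"
  have "(\<lambda>_. A) \<in> const_seqs"
    unfolding A_def const_seqs_def using assms(2) seqA_hclasses by blast
  moreover have "seq_less s (\<lambda>_. A)" "seq_less (\<lambda>_. A) u"
    unfolding seq_less_def A_def using M1 M2 by (intro exI[of _ "max M1 M2"]; simp)+
  ultimately show ?thesis by blast
qed

lemma seq_less_const_of_less: "seq_less u d \<Longrightarrow> \<exists>k. seq_less u (\<lambda>_. d k)"
  unfolding seq_less_def by (metis lessI)

lemma const_less_seq_of_less: "seq_less d u \<Longrightarrow> \<exists>k. seq_less (\<lambda>_. d k) u"
  unfolding seq_less_def by (metis lessI)

lemma not_seq_less_const_of_mono:
  fixes d :: "nat \<Rightarrow> 'a::linordered_field set"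
  assumes "\<And>j. d j \<in> hclasses" and "\<And>i j. i \<le> j \<Longrightarrow> cls_le (d i) (d j)"
  shows "\<not> seq_less d (\<lambda>_. d k)"
proof
  assume "seq_less d (\<lambda>_. d k)"
  then obtain M where "\<And>n. n > M \<Longrightarrow> cls_less (d n) (d k)"
    unfolding seq_less_def by blast
  then have "cls_less (d (max (Suc M) k)) (d k)"
    by simp
  then show False
    using assms cls_less_iff_not_le by (metis max.cobounded2)
qed

lemma not_const_less_seq_of_antimono:
  fixes d :: "nat \<Rightarrow> 'a::linordered_field set"
  assumes "\<And>j. d j \<in> hclasses" and "\<And>i j. i \<le> j \<Longrightarrow> cls_le (d j) (d i)"
  shows "\<not> seq_less (\<lambda>_. d k) d"
proof
  assume "seq_less (\<lambda>_. d k) d"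
  then obtain M where "\<And>n. n > M \<Longrightarrow> cls_less (d k) (d n)"
    unfolding seq_less_def by blast
  then have "cls_less (d k) (d (max (Suc M) k))"
    by simp
  then show False
    using assms cls_less_iff_not_le by (metis max.cobounded2)
qed

text \<open>The least upper bound is the sequence of values of the chain.\<close>
lemma const_chain_lub:
  fixes c :: "nat \<Rightarrow> nat \<Rightarrow> 'a::linordered_field set"
  assumes "\<And>j. c j \<in> const_seqs" and "\<And>i j. i < j \<Longrightarrow> seq_less (c i) (c j)"
  shows "\<exists>\<sigma>\<in>seqA. (\<forall>k. \<not> seq_less \<sigma> (c k)) \<and> (\<forall>u\<in>seqA. seq_less u \<sigma> \<longrightarrow> (\<exists>k. seq_less u (c k)))"
proof -
  obtain d where d: "\<And>j. d j \<in> hclasses" and c: "c = (\<lambda>j _. d j)"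
    using const_seqs_values[of c, OF assms(1)] by blast
  have d_mono: "cls_le (d i) (d j)" if "i \<le> j" for i j
  proof (cases "i = j")
    case True
    then show ?thesis using d cls_le_refl by blast
  next
    case False
    then show ?thesis
      using assms(2)[OF le_neq_implies_less[OF that False]]
      unfolding c seq_less_const_iff cls_less_def by simp
  qed
  then have "d \<in> seqA"
    unfolding seqA_def using d by blast
  then show ?thesis
    unfolding c using not_seq_less_const_of_mono[of d, OF d d_mono] seq_less_const_of_less[of _ d]
    by (intro bexI[of _ d]) auto
qed

lemma const_chain_glb:
  fixes c :: "nat \<Rightarrow> nat \<Rightarrow> 'a::linordered_field set"
  assumes "\<And>j. c j \<in> const_seqs" and "\<And>i j. i < j \<Longrightarrow> seq_less (c j) (c i)"
  shows "\<exists>\<sigma>\<in>seqA. (\<forall>k. \<not> seq_less (c k) \<sigma>) \<and> (\<forall>u\<in>seqA. seq_less \<sigma> u \<longrightarrow> (\<exists>k. seq_less (c k) u))"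
proof -
  obtain d where d: "\<And>j. d j \<in> hclasses" and c: "c = (\<lambda>j _. d j)"
    using const_seqs_values[of c, OF assms(1)] by blast
  have d_antimono: "cls_le (d j) (d i)" if "i \<le> j" for i j
  proof (cases "i = j")
    case True
    then show ?thesis using d cls_le_refl by blast
  next
    case False
    then show ?thesis
      using assms(2)[OF le_neq_implies_less[OF that False]]
      unfolding c seq_less_const_iff cls_less_def by simp
  qed
  then have "d \<in> seqA"
    unfolding seqA_def using d by blast
  then show ?thesis
    unfolding c using not_const_less_seq_of_antimono[of d, OF d d_antimono] const_less_seq_of_less[of d]
    by (intro bexI[of _ d]) auto
qed

interpretation seq_inc: dense_chain_complete seqA seq_less const_seqs
  by unfold_locales (fact const_seqs_subset_seqA const_seq_between const_chain_lub)+

interpretation seq_dec: dense_chain_complete seqA "\<lambda>s t. seq_less t s" const_seqs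
proof -
  interpret strict_weak_order seqA "\<lambda>s t. seq_less t s"
    by (rule seq_order.dual_strict_weak_order)
  show "dense_chain_complete seqA (\<lambda>s t. seq_less t s) const_seqs"
    by unfold_locales
      (fact const_seqs_subset_seqA const_chain_glb
        | subst conj_commute, rule const_seq_between, assumption+)+
qed

section \<open>The ordered set \<open>Rset\<close>\<close>

definition R_class :: "(nat \<Rightarrow> 'a::linordered_field set) \<Rightarrow> (nat \<Rightarrow> 'a set) set" where
  "R_class s = {t \<in> seqA. seq_equiv s t}"

lemma Rset_eq_image_R_class: "Rset = R_class ` seqA"
  unfolding Rset_def R_class_def by simp

lemma R_class_self: "s \<in> seqA \<Longrightarrow> s \<in> R_class s"
  unfolding R_class_def seq_equiv_def using seq_less_irrefl by auto

lemma R_le_R_class_iff: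
  assumes s: "s \<in> seqA" and t: "t \<in> seqA"
  shows "R_le (R_class s) (R_class t) \<longleftrightarrow> \<not> seq_less t s"
proof
  assume "R_le (R_class s) (R_class t)"
  then have "seq_less s t \<or> seq_equiv s t"
    unfolding R_le_def using R_class_self s t by blast
  then show "\<not> seq_less t s"
    using seq_order.trans seq_less_irrefl s t unfolding seq_equiv_def by blast
next
  assume ts: "\<not> seq_less t s"
  show "R_le (R_class s) (R_class t)"
    unfolding R_le_def
  proof (intro ballI)
    fix s' t'
    assume "s' \<in> R_class s" and "t' \<in> R_class t"
    then have s': "s' \<in> seqA" and t': "t' \<in> seqA" and "seq_equiv s s'" "seq_equiv t t'"
      unfolding R_class_def by auto
    have "\<not> seq_less t' s'"
    proof
      assume "seq_less t' s'"
      then have "seq_less t s'"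
        using seq_less_neg_trans[OF t' t s'] \<open>seq_equiv t t'\<close> unfolding seq_equiv_def by blast
      then show False
        using seq_less_neg_trans[OF t s s'] ts \<open>seq_equiv s s'\<close> unfolding seq_equiv_def by blast
    qed
    then show "seq_less s' t' \<or> seq_equiv s' t'"
      unfolding seq_equiv_def by blast
  qed
qed

lemma R_is_sup_R_class:
  assumes r: "\<And>k. r k \<in> seqA" and Xs: "\<And>k. Xs k = R_class (r k)" and \<sigma>: "\<sigma> \<in> seqA"
    and ub: "\<forall>k. \<not> seq_less \<sigma> (r k)"
    and least: "\<forall>u\<in>seqA. (\<forall>k. \<not> seq_less u (r k)) \<longrightarrow> \<not> seq_less u \<sigma>"
  shows "R_is_sup Xs (R_class \<sigma>)"
  unfolding R_is_sup_def Rset_eq_image_R_class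
proof (intro conjI allI ballI impI)
  show "R_class \<sigma> \<in> R_class ` seqA"
    using \<sigma> by blast
  show "R_le (Xs k) (R_class \<sigma>)" for k
    using R_le_R_class_iff[OF r \<sigma>] ub Xs by simp
next
  fix U
  assume "U \<in> R_class ` seqA" and "\<forall>k. R_le (Xs k) U"
  then obtain u where u: "u \<in> seqA" "U = R_class u" and "\<forall>k. \<not> seq_less u (r k)"
    using R_le_R_class_iff[OF r] Xs by auto
  then show "R_le (R_class \<sigma>) U"
    using least R_le_R_class_iff[OF \<sigma> u(1)] by simp
qed

lemma R_is_inf_R_class:
  assumes r: "\<And>k. r k \<in> seqA" and Xs: "\<And>k. Xs k = R_class (r k)" and \<sigma>: "\<sigma> \<in> seqA"
    and lb: "\<forall>k. \<not> seq_less (r k) \<sigma>"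
    and greatest: "\<forall>u\<in>seqA. (\<forall>k. \<not> seq_less (r k) u) \<longrightarrow> \<not> seq_less \<sigma> u"
  shows "R_is_inf Xs (R_class \<sigma>)"
  unfolding R_is_inf_def Rset_eq_image_R_class
proof (intro conjI allI ballI impI)
  show "R_class \<sigma> \<in> R_class ` seqA"
    using \<sigma> by blast
  show "R_le (R_class \<sigma>) (Xs k)" for k
    using R_le_R_class_iff[OF \<sigma> r] lb Xs by simp
next
  fix L
  assume "L \<in> R_class ` seqA" and "\<forall>k. R_le L (Xs k)"
  then obtain u where u: "u \<in> seqA" "L = R_class u" and "\<forall>k. \<not> seq_less (r k) u"
    using R_le_R_class_iff[OF _ r] Xs by auto
  then show "R_le L (R_class \<sigma>)"
    using greatest R_le_R_class_iff[OF u(1) \<sigma>] by simp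
qed

lemma R_mono_seq_representatives:
  assumes "R_mono_seq Xs"
  obtains r where "\<And>k. r k \<in> seqA" and "\<And>k. Xs k = R_class (r k)"
    and "(\<forall>i j. i \<le> j \<longrightarrow> \<not> seq_less (r j) (r i)) \<or> (\<forall>i j. i \<le> j \<longrightarrow> \<not> seq_less (r i) (r j))"
proof -
  have "\<forall>k. \<exists>s. s \<in> seqA \<and> Xs k = R_class s"
    using assms unfolding R_mono_seq_def Rset_eq_image_R_class by blast
  then obtain r where r: "\<And>k. r k \<in> seqA" and Xs: "\<And>k. Xs k = R_class (r k)"
    by metis
  show thesis
    using assms that[OF r Xs] unfolding R_mono_seq_def Xs R_le_R_class_iff[OF r r] by blast
qed

theorem mainTheorem3:
  fixes emb :: "real \<Rightarrow> 'a::linordered_field"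
    and J :: "(nat \<Rightarrow> real) \<Rightarrow> 'a"
    and Xs :: "nat \<Rightarrow> (nat \<Rightarrow> 'a set) set"
  assumes "hyper_structure emb J"
    and "R_mono_seq Xs"
  shows "(\<exists>S. R_is_sup Xs S) \<and> (\<exists>I. R_is_inf Xs I)"
proof -
  obtain r where r: "\<And>k. r k \<in> seqA" and Xs: "\<And>k. Xs k = R_class (r k)"
    and "(\<forall>i j. i \<le> j \<longrightarrow> \<not> seq_less (r j) (r i)) \<or> (\<forall>i j. i \<le> j \<longrightarrow> \<not> seq_less (r i) (r j))"
    using R_mono_seq_representatives[OF assms(2)] by blast
  then consider (inc) "\<And>i j. i \<le> j \<Longrightarrow> \<not> seq_less (r j) (r i)"
    | (dec) "\<And>i j. i \<le> j \<Longrightarrow> \<not> seq_less (r i) (r j)"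
    by blast
  then show ?thesis
  proof cases
    case inc
    obtain \<sigma> where "\<sigma> \<in> seqA" "\<forall>k. \<not> seq_less \<sigma> (r k)"
      "\<forall>u\<in>seqA. (\<forall>k. \<not> seq_less u (r k)) \<longrightarrow> \<not> seq_less u \<sigma>"
      using seq_inc.monotone_seq_lub[of r, OF r inc] by blast
    then have "R_is_sup Xs (R_class \<sigma>)"
      by (rule R_is_sup_R_class[OF r Xs])
    moreover have "R_is_inf Xs (R_class (r 0))"
      by (rule R_is_inf_R_class[OF r Xs r]) (use inc in auto)
    ultimately show ?thesis by blast
  next
    case dec
    obtain \<sigma> where "\<sigma> \<in> seqA" "\<forall>k. \<not> seq_less (r k) \<sigma>"
      "\<forall>u\<in>seqA. (\<forall>k. \<not> seq_less (r k) u) \<longrightarrow> \<not> seq_less \<sigma> u"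
      using seq_dec.monotone_seq_lub[of r, OF r dec] by blast
    then have "R_is_inf Xs (R_class \<sigma>)"
      by (rule R_is_inf_R_class[OF r Xs])
    moreover have "R_is_sup Xs (R_class (r 0))"
      by (rule R_is_sup_R_class[OF r Xs r]) (use dec in auto)
    ultimately show ?thesis by blast
  qed
qed

end
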